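(* Let $k$ be a field and let $d,m$ be integers with $d$ even, $d\ge 4$ and $d<m-1$. Set $a=(d+2)/2$, $R=k[x_1,\dots,x_m,z]$, $I=(I_{a,1,m-1},I_{a,2,m})$ and $J=(I_{a-1,2,m-1},\, z\,I_{a-2,3,m-2})$, ideals of $R$ with $I\subset J$. (a) For all $v\in I_{a-1,2,m-1}$ and $w\in I_{a-2,3,m-2}$ we have $x_1x_m v w=0$ in $R/I$. (b) Let $b\in J$ be an element whose image in $R/I$ is $R/I$-regular, and write its image as $b=b_1+z b_2$ with $b_1$ in the ideal of $R/I$ generated by $I_{a-1,2,m-1}$ and $b_2$ in the ideal of $R/I$ generated by $I_{a-2,3,m-2}$. Let $s_0=b_2x_1x_m/b\in K(R/I)$, where $K(R/I)$ is the total quotient ring of $R/I$. Then $s_0 z w = w x_1x_m$ in $K(R/I)$ for all $w\in I_{a-2,3,m-2}$.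
   Context: For positive integers $a,p,q$ with $p<q$ and $2a\le q-p+2$, $I_{a,p,q}$ denotes the ideal (of any polynomial ring containing $x_p,\dots,x_q$) generated by all monomials $x_{t_1}\cdots x_{t_a}$ with $p\le t_1$, $t_a\le q$ and $t_j+2\le t_{j+1}$ for $1\le j\le a-1$. The total quotient ring of a ring is its localization at the multiplicative set of non-zero-divisors. *)

theory Defs
  imports "HOL-Library.Poly_Mapping"
begin

(* Polynomials over a field k in variables indexed by nat:
  type (nat \<Rightarrow>\<^sub>0 nat) \<Rightarrow>\<^sub>0 'k (monomials = exponent vectors).
  Convention: variable 0 is z, variable i (1 \<le> i \<le> m) is x_i. *)

type_synonym 'k mpoly = "(nat \<Rightarrow>\<^sub>0 nat) \<Rightarrow>\<^sub>0 'k"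

definition pvar :: "nat \<Rightarrow> 'k::field mpoly" where
  "pvar i = Poly_Mapping.single (Poly_Mapping.single i 1) 1"

(* The polynomial ring R = k[z, x_1, ..., x_m] as the set of polynomials
  only involving the variables 0..m. *)
definition polyR :: "nat \<Rightarrow> 'k::field mpoly set" where
  "polyR m = {p. \<forall>mon \<in> Poly_Mapping.keys p. Poly_Mapping.keys mon \<subseteq> {0..m}}"

inductive_set gen_ideal :: "'a::comm_ring_1 set \<Rightarrow> 'a set \<Rightarrow> 'a set"
  for S G where
    zero: "0 \<in> gen_ideal S G"
  | comb: "r \<in> S \<Longrightarrow> g \<in> G \<Longrightarrow> p \<in> gen_ideal S G \<Longrightarrow> r * g + p \<in> gen_ideal S G"

(* Generators of I_{a,p,q}: monomials x_{t_1}...x_{t_a} with p \<le> t_1,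
  t_a \<le> q, t_j + 2 \<le> t_{j+1} (indices shifted to 0..a-1). *)
definition gensI :: "nat \<Rightarrow> nat \<Rightarrow> nat \<Rightarrow> 'k::field mpoly set" where
  "gensI a p q = {(\<Prod>j<a. pvar (t j)) | t.
      p \<le> t 0 \<and> t (a - 1) \<le> q \<and> (\<forall>j. j + 1 < a \<longrightarrow> t j + 2 \<le> t (j + 1))}"

definition idealI :: "nat \<Rightarrow> nat \<Rightarrow> nat \<Rightarrow> nat \<Rightarrow> 'k::field mpoly set" where
  "idealI m a p q = gen_ideal (polyR m) (gensI a p q)"

definition regular_mod :: "'a::comm_ring_1 set \<Rightarrow> 'a set \<Rightarrow> 'a \<Rightarrow> bool" where
  "regular_mod S I b \<longleftrightarrow> b \<in> S \<and> (\<forall>c\<in>S. b * c \<in> I \<longrightarrow> c \<in> I)"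

(* Total quotient ring K(R/I): its elements are fractions a/s with a, s \<in> R
  and s regular in R/I, represented by pairs (a, s); the standard localization
  equality, multiplication and canonical map are written out below. *)
definition tq_frac :: "'a::comm_ring_1 \<Rightarrow> 'a \<Rightarrow> 'a \<times> 'a" where
  "tq_frac a s = (a, s)"

definition tq_of :: "'a::comm_ring_1 \<Rightarrow> 'a \<times> 'a" where
  "tq_of a = (a, 1)"

definition tq_mult :: "'a::comm_ring_1 \<times> 'a \<Rightarrow> 'a \<times> 'a \<Rightarrow> 'a \<times> 'a" where
  "tq_mult x y = (fst x * fst y, snd x * snd y)"

definition tq_eq :: "'a::comm_ring_1 set \<Rightarrow> 'a set \<Rightarrow> 'a \<times> 'a \<Rightarrow> 'a \<times> 'a \<Rightarrow> bool" where
  "tq_eq S I x y \<longleftrightarrow>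
     (\<exists>u. regular_mod S I u \<and> u * (fst x * snd y - fst y * snd x) \<in> I)"

end

theory Submission
  imports Defs
begin

text \<open>Identify a generator of \<open>I\<^sub>a\<^sub>,\<^sub>p\<^sub>,\<^sub>q\<close> with its index sequence
  \<open>p \<le> t\<^sub>0, t\<^sub>j + 2 \<le> t\<^sub>j\<^sub>+\<^sub>1, t\<^sub>a\<^sub>-\<^sub>1 \<le> q\<close>. For part (a) it suffices to treat generators
  \<open>v, w\<close>: then \<open>x\<^sub>1 x\<^sub>m v w\<close> is the product of \<open>T = (1, w\<^sub>0, \<dots>, w\<^sub>a\<^sub>-\<^sub>3, m)\<close>, of
  length \<open>a\<close>, and of \<open>S = v\<close>, of length \<open>a - 1\<close> inside \<open>[2, m - 1]\<close>. Since \<open>T\<close> climbs from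
  \<open>1\<close> to \<open>m \<ge> 2a\<close>, the two sequences cannot interleave with gaps of at most 1 throughout:
  somewhere \<open>T\<^sub>k + 2 \<le> S\<^sub>k\<close> or \<open>S\<^sub>k + 2 \<le> T\<^sub>k\<^sub>+\<^sub>1\<close>. Splicing the two sequences at such a
  place gives a generator of \<open>I\<^sub>a\<^sub>,\<^sub>1\<^sub>,\<^sub>m\<^sub>-\<^sub>1\<close> (starting with \<open>T\<close>) or of
  \<open>I\<^sub>a\<^sub>,\<^sub>2\<^sub>,\<^sub>m\<close> (starting with \<open>S\<close>) dividing the product. Part (b) is the computation
  \<open>b w x\<^sub>1 x\<^sub>m \<equiv> (v + z b\<^sub>2) w x\<^sub>1 x\<^sub>m \<equiv> z b\<^sub>2 w x\<^sub>1 x\<^sub>m\<close> modulo \<open>I\<close>, which is the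
  claimed equality of fractions after clearing denominators.\<close>

lemma polyR_add: assumes "p \<in> polyR m" "q \<in> polyR m" shows "p + q \<in> polyR m"
  using assms keys_add[of p q] unfolding polyR_def by blast

lemma polyR_mult: assumes "p \<in> polyR m" "q \<in> polyR m" shows "p * q \<in> polyR m"
  unfolding polyR_def
proof (intro CollectI ballI)
  fix mon assume "mon \<in> Poly_Mapping.keys (p * q)"
  then obtain u v where "mon = u + v" "u \<in> Poly_Mapping.keys p" "v \<in> Poly_Mapping.keys q"
    using keys_mult[of p q] by blast
  then show "Poly_Mapping.keys mon \<subseteq> {0..m}"
    using assms keys_add[of u v] unfolding polyR_def by blast
qed

lemma polyR_mult_closed: "\<forall>p\<in>polyR m. \<forall>q\<in>polyR m. p * q \<in> polyR m"
  by (simp add: polyR_mult)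

lemma polyR_add_closed: "\<forall>p\<in>polyR m. \<forall>q\<in>polyR m. p + q \<in> polyR m"
  by (simp add: polyR_add)

lemma polyR_uminus: "p \<in> polyR m \<Longrightarrow> - p \<in> polyR m"
  unfolding polyR_def by simp

lemma polyR_zero: "0 \<in> polyR m" and polyR_one: "1 \<in> polyR m"
  unfolding polyR_def by simp_all

lemma pvar_polyR: "i \<le> m \<Longrightarrow> pvar i \<in> polyR m"
  unfolding polyR_def pvar_def by simp

lemma prod_pvar_polyR:
  assumes "\<And>j. j \<in> A \<Longrightarrow> t j \<le> m"
  shows "(\<Prod>j\<in>A. pvar (t j)) \<in> polyR m"
  using assms
proof (induction A rule: infinite_finite_induct)
  case (insert j A)
  then show ?case by (simp add: polyR_mult pvar_polyR)
qed (simp_all add: polyR_one)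

lemma gen_ideal_add:
  "p \<in> gen_ideal S G \<Longrightarrow> q \<in> gen_ideal S G \<Longrightarrow> p + q \<in> gen_ideal S G"
proof (induction p rule: gen_ideal.induct)
  case (comb r g p)
  then show ?case using gen_ideal.comb[of r S g G "p + q"] by (simp add: add.assoc)
qed simp

lemma gen_ideal_mult:
  assumes S_mult: "\<forall>a\<in>S. \<forall>b\<in>S. a * b \<in> S" and "s \<in> S" "p \<in> gen_ideal S G"
  shows "s * p \<in> gen_ideal S G"
  using \<open>p \<in> gen_ideal S G\<close>
proof (induction p rule: gen_ideal.induct)
  case (comb r g p)
  have "s * r \<in> S" using S_mult \<open>s \<in> S\<close> \<open>r \<in> S\<close> by blast
  then have "(s * r) * g + s * p \<in> gen_ideal S G" using comb by (intro gen_ideal.comb)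
  then show ?case by (simp add: algebra_simps)
qed (simp add: gen_ideal.zero)

lemma gen_ideal_gen: "r \<in> S \<Longrightarrow> g \<in> G \<Longrightarrow> r * g \<in> gen_ideal S G"
  using gen_ideal.comb[OF _ _ gen_ideal.zero] by fastforce

lemma gen_ideal_minimal:
  assumes S_mult: "\<forall>a\<in>S. \<forall>b\<in>S. a * b \<in> S" and "G \<subseteq> gen_ideal S H"
  shows "gen_ideal S G \<subseteq> gen_ideal S H"
proof
  show "p \<in> gen_ideal S H" if "p \<in> gen_ideal S G" for p
    using that
  proof (induction p rule: gen_ideal.induct)
    case (comb r g p)
    then have "r * g \<in> gen_ideal S H"
      using \<open>G \<subseteq> gen_ideal S H\<close> by (intro gen_ideal_mult[OF S_mult]) auto
    then show ?case using comb.IH by (rule gen_ideal_add)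
  qed (rule gen_ideal.zero)
qed

lemma gen_ideal_mono: "G \<subseteq> H \<Longrightarrow> gen_ideal S G \<subseteq> gen_ideal S H"
proof
  show "p \<in> gen_ideal S H" if "G \<subseteq> H" "p \<in> gen_ideal S G" for p
    using that(2) by induction (use that(1) in \<open>auto intro: gen_ideal.intros\<close>)
qed

lemma gen_ideal_subset:
  assumes "\<forall>a\<in>S. \<forall>b\<in>S. a * b \<in> S" "\<forall>a\<in>S. \<forall>b\<in>S. a + b \<in> S"
    and "0 \<in> S" "G \<subseteq> S"
  shows "gen_ideal S G \<subseteq> S"
proof
  show "p \<in> S" if "p \<in> gen_ideal S G" for p
    using that
  proof induction
    case (comb r g p)
    then have "r * g \<in> S" using assms(1,4) by blast
    then show ?case using assms(2) comb.IH by blast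
  qed (fact assms(3))
qed

lemma gen_ideal_bilinear:
  assumes S_mult: "\<forall>a\<in>S. \<forall>b\<in>S. a * b \<in> S"
    and gens: "\<And>g h. g \<in> G \<Longrightarrow> h \<in> H \<Longrightarrow> c * g * h \<in> gen_ideal S K"
    and "p \<in> gen_ideal S G" "q \<in> gen_ideal S H"
  shows "c * p * q \<in> gen_ideal S K"
proof -
  have gen_left: "c * g * q \<in> gen_ideal S K" if "g \<in> G" for g
    using \<open>q \<in> gen_ideal S H\<close>
  proof (induction q rule: gen_ideal.induct)
    case (comb r h q)
    have "r * (c * g * h) + c * g * q \<in> gen_ideal S K"
      using gen_ideal_mult[OF S_mult \<open>r \<in> S\<close> gens[OF \<open>g \<in> G\<close> \<open>h \<in> H\<close>]] comb.IH
      by (rule gen_ideal_add)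
    then show ?case by (simp add: algebra_simps)
  qed (simp add: gen_ideal.zero)
  show ?thesis
    using \<open>p \<in> gen_ideal S G\<close>
  proof (induction p rule: gen_ideal.induct)
    case (comb r g p)
    have "r * (c * g * q) + c * p * q \<in> gen_ideal S K"
      using gen_ideal_mult[OF S_mult \<open>r \<in> S\<close> gen_left[OF \<open>g \<in> G\<close>]] comb.IH
      by (rule gen_ideal_add)
    then show ?case by (simp add: algebra_simps)
  qed (simp add: gen_ideal.zero)
qed

definition spaced :: "nat \<Rightarrow> (nat \<Rightarrow> nat) \<Rightarrow> bool" where
  "spaced n t \<longleftrightarrow> (\<forall>j. j + 1 < n \<longrightarrow> t j + 2 \<le> t (j + 1))"

lemma spacedD: "spaced n t \<Longrightarrow> j + 1 < n \<Longrightarrow> t j + 2 \<le> t (j + 1)"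
  unfolding spaced_def by blast

lemma gensI_iff:
  "g \<in> gensI n p q \<longleftrightarrow>
     (\<exists>t. g = (\<Prod>j<n. pvar (t j)) \<and> p \<le> t 0 \<and> t (n - 1) \<le> q \<and> spaced n t)"
  unfolding gensI_def spaced_def by blast

lemma spaced_le:
  assumes "spaced n t" "i \<le> j" "j < n"
  shows "t i + 2 * (j - i) \<le> t j"
  using assms(2,3)
proof (induction j)
  case (Suc j)
  show ?case
  proof (cases "i = Suc j")
    case False
    then have "t i + 2 * (j - i) \<le> t j" using Suc by simp
    moreover have "t j + 2 \<le> t (Suc j)" using assms(1) Suc.prems unfolding spaced_def by simp
    ultimately show ?thesis using Suc.prems False by (simp add: Suc_diff_le)
  qed simp
qed simp

lemma spaced_le_last: "spaced n t \<Longrightarrow> j < n \<Longrightarrow> t j \<le> t (n - 1)"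
  using spaced_le[of n t j "n - 1"] by fastforce

lemma spaced_splice:
  assumes "spaced p A" "spaced q B" "k < p" "A k + 2 \<le> B k"
  shows "spaced (Suc q) (\<lambda>j. if j \<le> k then A j else B (j - 1))"
  unfolding spaced_def
proof (intro allI impI)
  fix j assume "j + 1 < Suc q"
  consider "j + 1 \<le> k" | "j = k" | "k < j" by linarith
  then show "(if j \<le> k then A j else B (j - 1)) + 2 \<le> (if j + 1 \<le> k then A (j + 1) else B (j + 1 - 1))"
  proof cases
    case 1
    then show ?thesis using spacedD[OF assms(1), of j] assms(3) by simp
  next
    case 2
    then show ?thesis using assms(4) by simp
  next
    case 3
    then have "B (j - 1) + 2 \<le> B (j - 1 + 1)"
      using \<open>j + 1 < Suc q\<close> by (intro spacedD[OF assms(2)]) simp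
    with 3 show ?thesis by simp
  qed
qed

lemma interleaving_gap:
  fixes A B :: "nat \<Rightarrow> nat"
  assumes "A 0 + 2 * n < A n"
  shows "\<exists>k<n. A k + 2 \<le> B k \<or> B k + 2 \<le> A (Suc k)"
proof (rule ccontr)
  assume "\<not> ?thesis"
  then have step: "A (Suc k) \<le> A k + 2" if "k < n" for k
    using that by fastforce
  have "A j \<le> A 0 + 2 * j" if "j \<le> n" for j
    using that
  proof (induction j)
    case (Suc j)
    then show ?case using step[of j] by simp
  qed simp
  then show False using assms by fastforce
qed

lemma prod_lessThan_splice:
  fixes g :: "nat \<Rightarrow> 'a::comm_monoid_mult"
  assumes "k < p" "k < q"
  shows "(\<Prod>j<p. g (A j)) * (\<Prod>j<q. g (B j)) =
    (\<Prod>j\<in>{Suc k..<p}. g (A j)) * (\<Prod>j<k. g (B j)) *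
    (\<Prod>j<Suc q. g (if j \<le> k then A j else B (j - 1)))"
proof -
  have split: "(\<Prod>j<n. f j) = (\<Prod>j<l. f j) * (\<Prod>j\<in>{l..<n}. f j)" if "l \<le> n"
    for f :: "nat \<Rightarrow> 'a" and l n
    using that by (simp add: prod.atLeastLessThan_concat flip: atLeast0LessThan)
  have "(\<Prod>j<Suc q. g (if j \<le> k then A j else B (j - 1)))
      = (\<Prod>j<Suc k. g (A j)) * (\<Prod>j\<in>{Suc k..<Suc q}. g (B (j - 1)))"
    using assms by (subst split[of "Suc k"]) (auto intro!: arg_cong2[where f = "(*)"] prod.cong)
  also have "(\<Prod>j\<in>{Suc k..<Suc q}. g (B (j - 1))) = (\<Prod>j\<in>{k..<q}. g (B j))"
    using prod.shift_bounds_nat_ivl[of "\<lambda>j. g (B (j - 1))" k 1 q] by simp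
  finally have spliced: "(\<Prod>j<Suc q. g (if j \<le> k then A j else B (j - 1)))
      = (\<Prod>j<Suc k. g (A j)) * (\<Prod>j\<in>{k..<q}. g (B j))" .
  show ?thesis
    unfolding spliced split[of "Suc k" p "\<lambda>j. g (A j)", OF Suc_leI[OF \<open>k < p\<close>]]
      split[of k q "\<lambda>j. g (B j)", OF less_imp_le[OF \<open>k < q\<close>]]
    by (simp only: mult_ac)
qed

lemma gensI_mono: "p' \<le> p \<Longrightarrow> q \<le> q' \<Longrightarrow> gensI n p q \<subseteq> gensI n p' q'"
  unfolding gensI_def by fastforce

lemma gensI_polyR: "q \<le> m \<Longrightarrow> gensI n p q \<subseteq> polyR m"
proof
  fix g assume "q \<le> m" "g \<in> gensI n p q"
  then obtain t where "g = (\<Prod>j<n. pvar (t j))" "t (n - 1) \<le> q" "spaced n t"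
    unfolding gensI_iff by blast
  then show "g \<in> polyR m"
    using \<open>q \<le> m\<close> spaced_le_last by (fastforce intro: prod_pvar_polyR)
qed

lemma gensI_Suc_first:
  assumes "g \<in> gensI (Suc n) p q" "0 < n"
  obtains i g' where "g = pvar i * g'" "i \<le> q" "g' \<in> gensI n (p + 2) q"
proof -
  obtain t where g: "g = (\<Prod>j<Suc n. pvar (t j))" and t: "p \<le> t 0" "t n \<le> q" "spaced (Suc n) t"
    using assms(1) unfolding gensI_iff by auto
  have "g = pvar (t 0) * (\<Prod>j<n. pvar (t (Suc j)))"
    unfolding g by (rule prod.lessThan_Suc_shift)
  moreover have "t 0 \<le> q" using spaced_le_last[OF t(3), of 0] t(2) by simp
  moreover have "(\<Prod>j<n. pvar (t (Suc j))) \<in> gensI n (p + 2) q"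
    unfolding gensI_iff
  proof (intro exI conjI)
    show "p + 2 \<le> t (Suc 0)" using spacedD[OF t(3), of 0] t(1) assms(2) by simp
    show "t (Suc (n - 1)) \<le> q" using t assms(2) by simp
    show "spaced n (\<lambda>j. t (Suc j))" using t(3) unfolding spaced_def by simp
  qed simp
  ultimately show thesis by (rule that)
qed

lemma gensI_Suc_last:
  assumes "g \<in> gensI (Suc n) p q" "0 < n"
  obtains i g' where "g = pvar i * g'" "i \<le> q" "g' \<in> gensI n p (q - 2)"
proof -
  obtain t where g: "g = (\<Prod>j<Suc n. pvar (t j))" and t: "p \<le> t 0" "t n \<le> q" "spaced (Suc n) t"
    using assms(1) unfolding gensI_iff by auto
  have "g = pvar (t n) * (\<Prod>j<n. pvar (t j))"
    unfolding g by (simp add: mult.commute)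
  moreover note \<open>t n \<le> q\<close>
  moreover have "(\<Prod>j<n. pvar (t j)) \<in> gensI n p (q - 2)"
    unfolding gensI_iff
  proof (intro exI conjI)
    have "t (n - 1) + 2 \<le> t (n - 1 + 1)" using assms(2) by (intro spacedD[OF t(3)]) simp
    then show "t (n - 1) \<le> q - 2" using t(2) assms(2) by simp
    show "spaced n t" using t(3) unfolding spaced_def by simp
  qed (use t in simp_all)
  ultimately show thesis by (rule that)
qed

lemma spliced_prod_mem_gen_ideal:
  assumes "spaced p A" "spaced q B" "k < p" "k < q" "A k + 2 \<le> B k"
    and "\<And>j. j < p \<Longrightarrow> A j \<le> m" "\<And>j. j < q \<Longrightarrow> B j \<le> m"
    and "lo \<le> A 0" "B (q - 1) \<le> hi"
  shows "((\<Prod>j<p. pvar (A j)) * (\<Prod>j<q. pvar (B j)) :: 'k::field mpoly)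
    \<in> gen_ideal (polyR m) (gensI (Suc q) lo hi)"
proof -
  define f where "f j = (if j \<le> k then A j else B (j - 1))" for j
  have "((\<Prod>j\<in>{Suc k..<p}. pvar (A j)) * (\<Prod>j<k. pvar (B j)) :: 'k mpoly) \<in> polyR m"
    using assms by (intro polyR_mult prod_pvar_polyR) auto
  moreover have "(\<Prod>j<Suc q. pvar (f j) :: 'k mpoly) \<in> gensI (Suc q) lo hi"
    unfolding gensI_iff
  proof (intro exI conjI)
    show "spaced (Suc q) f" unfolding f_def by (rule spaced_splice) fact+
  qed (use assms in \<open>auto simp: f_def\<close>)
  ultimately show ?thesis
    unfolding prod_lessThan_splice[OF \<open>k < p\<close> \<open>k < q\<close>] f_def by (rule gen_ideal_gen)
qed

lemma interleaved_prod_mem_gen_ideal: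
  assumes "2 \<le> a" "2 * a \<le> m"
    and T: "spaced a T" "T 0 = 1" "T (a - 1) = m"
    and S: "spaced (a - 1) S" "2 \<le> S 0" "S (a - 2) \<le> m - 1"
  shows "((\<Prod>j<a. pvar (T j)) * (\<Prod>j<a - 1. pvar (S j)) :: 'k::field mpoly)
    \<in> gen_ideal (polyR m) (gensI a 1 (m - 1) \<union> gensI a 2 m)"
proof -
  have a: "Suc (a - 1) = a" "a - 1 - 1 = a - 2" using assms(1) by simp_all
  have T_le: "T j \<le> m" if "j < a" for j
    using spaced_le_last[OF T(1) that] T(3) by simp
  have S_le: "S j \<le> m" if "j < a - 1" for j
    using spaced_le_last[OF S(1) that] S(3) a by simp
  have "T 0 + 2 * (a - 1) < T (a - 1)" using assms by simp
  then obtain k where "k < a - 1" and "T k + 2 \<le> S k \<or> S k + 2 \<le> T (Suc k)"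
    using interleaving_gap by blast
  then show ?thesis
  proof (elim disjE)
    assume "T k + 2 \<le> S k"
    then have "((\<Prod>j<a. pvar (T j)) * (\<Prod>j<a - 1. pvar (S j)) :: 'k mpoly)
        \<in> gen_ideal (polyR m) (gensI (Suc (a - 1)) 1 (m - 1))"
      using \<open>k < a - 1\<close> T S a T_le S_le by (intro spliced_prod_mem_gen_ideal) auto
    then show ?thesis
      using gen_ideal_mono[of "gensI a 1 (m - 1)" "gensI a 1 (m - 1) \<union> gensI a 2 m" "polyR m"] a(1)
      by auto
  next
    assume gap: "S k + 2 \<le> T (Suc k)"
    have "((\<Prod>j<a - 1. pvar (S j)) * (\<Prod>j<a - 1. pvar (T (Suc j))) :: 'k mpoly)
        \<in> gen_ideal (polyR m) (gensI (Suc (a - 1)) 2 m)"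
    proof (rule spliced_prod_mem_gen_ideal)
      show "spaced (a - 1) (\<lambda>j. T (Suc j))" using T(1) unfolding spaced_def by simp
      have "Suc (a - 1 - 1) = a - 1" using assms(1) by simp
      then show "T (Suc (a - 1 - 1)) \<le> m" using T(3) by simp
    qed (use gap \<open>k < a - 1\<close> T S a T_le S_le in auto)
    then have spliced: "((\<Prod>j<a - 1. pvar (S j)) * (\<Prod>j<a - 1. pvar (T (Suc j))) :: 'k mpoly)
        \<in> gen_ideal (polyR m) (gensI a 1 (m - 1) \<union> gensI a 2 m)"
      using gen_ideal_mono[of "gensI a 2 m" "gensI a 1 (m - 1) \<union> gensI a 2 m" "polyR m"] a(1)
      by auto
    have "(pvar (T 0) :: 'k mpoly) \<in> polyR m" using T(2) assms by (simp add: pvar_polyR)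
    then have "(pvar (T 0) * ((\<Prod>j<a - 1. pvar (S j)) * (\<Prod>j<a - 1. pvar (T (Suc j)))) :: 'k mpoly)
        \<in> gen_ideal (polyR m) (gensI a 1 (m - 1) \<union> gensI a 2 m)"
      using spliced by (rule gen_ideal_mult[OF polyR_mult_closed])
    moreover have "(\<Prod>j<a. pvar (T j) :: 'k mpoly) = pvar (T 0) * (\<Prod>j<a - 1. pvar (T (Suc j)))"
      by (subst a(1)[symmetric]) (rule prod.lessThan_Suc_shift)
    ultimately show ?thesis by (simp add: mult_ac)
  qed
qed

lemma spaced_bracket:
  assumes "spaced n u" "3 \<le> u 0" "u (n - 1) + 2 \<le> m"
  shows "spaced (Suc (Suc n)) (\<lambda>j. if j = 0 then 1 else if j = Suc n then m else u (j - 1))"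
  unfolding spaced_def
proof (intro allI impI)
  fix j assume "j + 1 < Suc (Suc n)"
  then consider "j = 0" | "0 < j" "j < n" | "0 < j" "j = n" by linarith
  then show "(if j = 0 then 1 else if j = Suc n then m else u (j - 1)) + 2
      \<le> (if j + 1 = 0 then 1 else if j + 1 = Suc n then m else u (j + 1 - 1))"
  proof cases
    case 2
    then have "u (j - 1) + 2 \<le> u (j - 1 + 1)" by (intro spacedD[OF assms(1)]) simp
    with 2 show ?thesis by simp
  qed (use assms in auto)
qed

lemma x1_xm_gensI_mem:
  assumes "3 \<le> a" "2 * a \<le> m"
    and "g \<in> gensI (a - 1) 2 (m - 1)" "h \<in> gensI (a - 2) 3 (m - 2)"
  shows "pvar 1 * pvar m * g * h \<in> gen_ideal (polyR m) (gensI a 1 (m - 1) \<union> gensI a 2 m)"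
proof -
  obtain s where g: "g = (\<Prod>j<a - 1. pvar (s j))"
    and s: "2 \<le> s 0" "s (a - 2) \<le> m - 1" "spaced (a - 1) s"
    using assms(3) unfolding gensI_iff by (auto simp: numeral_2_eq_2)
  obtain u where h: "h = (\<Prod>j<a - 2. pvar (u j))"
    and u: "3 \<le> u 0" "u (a - 2 - 1) \<le> m - 2" "spaced (a - 2) u"
    using assms(4) unfolding gensI_iff by auto
  define n where "n = a - 2"
  have a: "a = Suc (Suc n)" using assms(1) by (simp add: n_def)
  define T where "T j = (if j = 0 then 1 else if j = Suc n then m else u (j - 1))" for j
  have "u (n - 1) + 2 \<le> m" using u assms unfolding n_def by linarith
  then have "spaced a T" unfolding a T_def using u n_def by (intro spaced_bracket) auto
  moreover have "T 0 = 1" "T (a - 1) = m" by (simp_all add: T_def a)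
  ultimately have "(\<Prod>j<a. pvar (T j)) * g \<in> gen_ideal (polyR m) (gensI a 1 (m - 1) \<union> gensI a 2 m)"
    unfolding g using assms(1,2) s by (intro interleaved_prod_mem_gen_ideal) auto
  moreover have "(\<Prod>j<a. pvar (T j)) = pvar 1 * pvar m * h"
  proof -
    have "(\<Prod>j<a. pvar (T j)) = pvar (T 0) * (\<Prod>j<n. pvar (T (Suc j))) * pvar (T (Suc n))"
      unfolding a prod.lessThan_Suc[of _ "Suc n"] prod.lessThan_Suc_shift[of _ n] ..
    also have "(\<Prod>j<n. pvar (T (Suc j))) = h"
      unfolding h n_def[symmetric] by (rule prod.cong) (auto simp: T_def)
    finally show ?thesis by (simp add: T_def mult_ac)
  qed
  ultimately show ?thesis by (simp add: mult_ac)
qed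

lemma gen_ideal_gensI_Suc_subset:
  assumes "0 < n"
  shows "gen_ideal (polyR m) (gensI (Suc n) 1 (m - 1) \<union> gensI (Suc n) 2 m :: 'k::field mpoly set)
    \<subseteq> gen_ideal (polyR m) (gensI n 2 (m - 1) \<union> H)"
proof (rule gen_ideal_minimal[OF polyR_mult_closed], rule subsetI)
  fix g :: "'k mpoly" assume "g \<in> gensI (Suc n) 1 (m - 1) \<union> gensI (Suc n) 2 m"
  then obtain i g' where "g = pvar i * g'" "i \<le> m" "g' \<in> gensI n 2 (m - 1)"
  proof
    assume "g \<in> gensI (Suc n) 1 (m - 1)"
    then obtain i g' where "g = pvar i * g'" "i \<le> m - 1" "g' \<in> gensI n (1 + 2) (m - 1)"
      using assms by (rule gensI_Suc_first)
    moreover have "gensI n (1 + 2) (m - 1) \<subseteq> gensI n 2 (m - 1)" by (rule gensI_mono) simp_all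
    ultimately show thesis by (intro that[of i g']) auto
  next
    assume "g \<in> gensI (Suc n) 2 m"
    then obtain i g' where "g = pvar i * g'" "i \<le> m" "g' \<in> gensI n 2 (m - 2)"
      using assms by (rule gensI_Suc_last)
    moreover have "gensI n 2 (m - 2) \<subseteq> gensI n 2 (m - 1)" by (rule gensI_mono) simp_all
    ultimately show thesis by (intro that[of i g']) auto
  qed
  then show "g \<in> gen_ideal (polyR m) (gensI n 2 (m - 1) \<union> H)"
    by (simp add: gen_ideal_gen pvar_polyR)
qed

lemma tq_eq_frac_mult_of_decomposition:
  fixes S :: "'a::comm_ring_1 set"
  assumes S_mult: "\<forall>p\<in>S. \<forall>q\<in>S. p * q \<in> S"
    and S_uminus: "\<And>p. p \<in> S \<Longrightarrow> - p \<in> S" and "1 \<in> S" "c * w \<in> S"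
    and decomp: "b - (b1 + z * b2) \<in> gen_ideal S G" "b1 - v \<in> gen_ideal S G"
    and vanish: "c * v * w \<in> gen_ideal S G"
  shows "tq_eq S (gen_ideal S G) (tq_mult (tq_frac (b2 * c) b) (tq_of (z * w))) (tq_of (w * c))"
proof -
  have "- (c * w) \<in> S" "- 1 \<in> S" using assms by simp_all
  note scaled = gen_ideal_mult[OF S_mult this(1)] gen_ideal_mult[OF S_mult this(2)]
  have "b2 * c * (z * w) * 1 - w * c * (b * 1)
      = (- (c * w)) * (b - (b1 + z * b2)) + (- (c * w)) * (b1 - v) + (- 1) * (c * v * w)"
    by (simp add: algebra_simps)
  also have "\<dots> \<in> gen_ideal S G"
    by (intro gen_ideal_add scaled decomp vanish)
  finally show ?thesis
    unfolding tq_eq_def regular_mod_def tq_mult_def tq_frac_def tq_of_def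
    using \<open>1 \<in> S\<close> by (intro exI[of _ 1]) simp
qed

theorem lemma3p5:
  fixes d m :: nat
  assumes "even d" and "4 \<le> d" and "d < m - 1"
  defines "a \<equiv> (d + 2) div 2"
      and "R \<equiv> polyR m :: 'k::field mpoly set"
      and "x \<equiv> (\<lambda>i. pvar i :: 'k mpoly)"
      and "z \<equiv> pvar 0 :: 'k mpoly"
  defines "I \<equiv> gen_ideal R (gensI a 1 (m - 1) \<union> gensI a 2 m)"
      and "J \<equiv> gen_ideal R (gensI (a - 1) 2 (m - 1) \<union> (\<lambda>g. z * g) ` gensI (a - 2) 3 (m - 2))"
  shows "I \<subseteq> J \<and>
    (\<forall>v \<in> idealI m (a - 1) 2 (m - 1). \<forall>w \<in> idealI m (a - 2) 3 (m - 2).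
           x 1 * x m * v * w \<in> I) \<and>
    (\<forall>b b1 b2. b \<in> J \<and> regular_mod R I b \<and> b1 \<in> R \<and> b2 \<in> R
           \<and> (\<exists>v \<in> idealI m (a - 1) 2 (m - 1). b1 - v \<in> I)
           \<and> (\<exists>v \<in> idealI m (a - 2) 3 (m - 2). b2 - v \<in> I)
           \<and> b - (b1 + z * b2) \<in> I \<longrightarrow>
         (\<forall>w \<in> idealI m (a - 2) 3 (m - 2).
            tq_eq R I (tq_mult (tq_frac (b2 * x 1 * x m) b) (tq_of (z * w)))
                      (tq_of (w * x 1 * x m))))"
proof -
  have a: "3 \<le> a" "2 * a \<le> m" using assms(1-3) unfolding a_def by (auto elim!: evenE)
  have "I \<subseteq> J"
    using gen_ideal_gensI_Suc_subset[of "a - 1" m] a unfolding I_def J_def R_def by simp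
  moreover have vanish: "x 1 * x m * v * w \<in> I"
    if "v \<in> idealI m (a - 1) 2 (m - 1)" "w \<in> idealI m (a - 2) 3 (m - 2)" for v w
    unfolding I_def R_def x_def
    by (rule gen_ideal_bilinear[OF polyR_mult_closed _ that[unfolded idealI_def]])
      (rule x1_xm_gensI_mem[OF a])
  moreover have "tq_eq R I (tq_mult (tq_frac (b2 * x 1 * x m) b) (tq_of (z * w))) (tq_of (w * x 1 * x m))"
    if "b - (b1 + z * b2) \<in> I" "b1 - v \<in> I" "v \<in> idealI m (a - 1) 2 (m - 1)"
      and "w \<in> idealI m (a - 2) 3 (m - 2)" for b b1 b2 v w
  proof -
    have "w \<in> R"
      using that(4) gen_ideal_subset[OF polyR_mult_closed polyR_add_closed polyR_zero
          gensI_polyR[of "m - 2" m]]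
      unfolding idealI_def R_def by auto
    then have "x 1 * x m * w \<in> R" using a unfolding R_def x_def by (simp add: polyR_mult pvar_polyR)
    from tq_eq_frac_mult_of_decomposition[OF polyR_mult_closed polyR_uminus polyR_one
        this[unfolded R_def] that(1,2)[unfolded I_def R_def] vanish[OF that(3,4), unfolded I_def R_def]]
    show ?thesis unfolding I_def R_def by (simp add: mult.assoc)
  qed
  ultimately show ?thesis by blast
qed

end
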